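(* Generalized PAV does not satisfy EJR-M: there exists an instance and an allocation selected by Generalized PAV that violates EJR-M.
   Context: Model: There is a set of agents $N=\{1,\dots,n\}$. The resource $R$ consists of a cake $C=[0,c]$ for a real $c\ge 0$ and a set of indivisible goods $G=\{g_1,\dots,g_m\}$ for an integer $m\ge 0$, with $\max(c,m)>0$. A piece of cake is a union of finitely many disjoint closed subintervals of $C$; its length $\ell(\cdot)$ is the sum of the lengths of its intervals. A bundle $R'=(C',G')$ consists of a piece of cake $C'\subseteq C$ and a set $G'\subseteq G$; its size is $s(R')=\ell(C')+|G'|$. Each agent $i$ approves a bundle $R_i=(C_i,G_i)$, and her utility for a bundle $R'$ is $u_i(R')=\ell(C_i\cap C')+|G_i\cap G'|$. A parameter $\alpha\in(0,c+m]$ is given; an allocation is a bundle $A$ with $s(A)\le\alpha$. For a real $t>0$, $N^*\subseteq N$ is $t$-cohesive if $|N^*|\ge t n/\alpha$ and $s(\bigcap_{i\in N^*}R_i)\ge t$. EJR-M: an allocation $A$ satisfies EJR-M if for every real $t>0$ and every $t$-cohesive group $N^*$ for which there exists a bundle $R^*\subseteq R$ with $s(R^* )=t$ and $R^*\subseteq R_i$ for all $i\in N^*$, there is $j\in N^*$ with $u_j(A)\ge t$. Generalized harmonic numbers: $H_x\coloneqq\sum_{k=1}^\infty\frac{x}{k(x+k)}$ for real $x\ge0$. Generalized PAV selects an allocation $R'$ with $s(R')\le\alpha$ maximizing $\sum_{i\in N}H_{u_i(R')}$. *)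

theory Defs
  imports "HOL-Analysis.Analysis"
begin

text \<open>Agents are 0,...,n-1; goods are 0,...,m-1; the cake is [0,c].
  A bndl is a pair (piece of cake, set of goods).\<close>

type_synonym bndl = "real set \<times> nat set"

definition is_piece :: "real \<Rightarrow> real set \<Rightarrow> bool" where
  "is_piece c S \<longleftrightarrow> (\<exists>ivs :: (real \<times> real) list.
      (\<forall>k<length ivs. 0 \<le> fst (ivs!k) \<and> fst (ivs!k) \<le> snd (ivs!k) \<and> snd (ivs!k) \<le> c)
    \<and> (\<forall>k<length ivs. \<forall>l<length ivs. k \<noteq> l \<longrightarrow>
          {fst (ivs!k)..snd (ivs!k)} \<inter> {fst (ivs!l)..snd (ivs!l)} = {})
    \<and> S = (\<Union>k<length ivs. {fst (ivs!k)..snd (ivs!k)}))"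

definition len :: "real set \<Rightarrow> real" where
  "len S = measure lborel S"

definition is_bundle :: "real \<Rightarrow> nat \<Rightarrow> bndl \<Rightarrow> bool" where
  "is_bundle c m B \<longleftrightarrow> is_piece c (fst B) \<and> snd B \<subseteq> {0..<m}"

definition bsize :: "bndl \<Rightarrow> real" where
  "bsize B = len (fst B) + real (card (snd B))"

definition bsubseteq :: "bndl \<Rightarrow> bndl \<Rightarrow> bool" where
  "bsubseteq B B' \<longleftrightarrow> fst B \<subseteq> fst B' \<and> snd B \<subseteq> snd B'"

definition util :: "bndl \<Rightarrow> bndl \<Rightarrow> real" where
  "util Ri B = len (fst Ri \<inter> fst B) + real (card (snd Ri \<inter> snd B))"

definition binter :: "(nat \<Rightarrow> bndl) \<Rightarrow> nat set \<Rightarrow> bndl" where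
  "binter R S = ((\<Inter>i\<in>S. fst (R i)), (\<Inter>i\<in>S. snd (R i)))"

definition valid_instance :: "nat \<Rightarrow> real \<Rightarrow> nat \<Rightarrow> real \<Rightarrow> (nat \<Rightarrow> bndl) \<Rightarrow> bool" where
  "valid_instance n c m \<alpha> R \<longleftrightarrow> n \<ge> 1 \<and> c \<ge> 0 \<and> max c (real m) > 0
     \<and> 0 < \<alpha> \<and> \<alpha> \<le> c + real m \<and> (\<forall>i<n. is_bundle c m (R i))"

definition is_allocation :: "real \<Rightarrow> nat \<Rightarrow> real \<Rightarrow> bndl \<Rightarrow> bool" where
  "is_allocation c m \<alpha> A \<longleftrightarrow> is_bundle c m A \<and> bsize A \<le> \<alpha>"

definition t_cohesive :: "nat \<Rightarrow> real \<Rightarrow> (nat \<Rightarrow> bndl) \<Rightarrow> real \<Rightarrow> nat set \<Rightarrow> bool" where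
  "t_cohesive n \<alpha> R t Ns \<longleftrightarrow> Ns \<subseteq> {0..<n} \<and> real (card Ns) \<ge> t * real n / \<alpha>
     \<and> bsize (binter R Ns) \<ge> t"

definition EJR_M :: "nat \<Rightarrow> real \<Rightarrow> nat \<Rightarrow> real \<Rightarrow> (nat \<Rightarrow> bndl) \<Rightarrow> bndl \<Rightarrow> bool" where
  "EJR_M n c m \<alpha> R A \<longleftrightarrow> (\<forall>t>0. \<forall>Ns. t_cohesive n \<alpha> R t Ns \<longrightarrow>
      (\<exists>Rs. is_bundle c m Rs \<and> bsize Rs = t \<and> (\<forall>i\<in>Ns. bsubseteq Rs (R i))) \<longrightarrow>
      (\<exists>j\<in>Ns. util (R j) A \<ge> t))"

definition genH :: "real \<Rightarrow> real" where
  "genH x = (\<Sum>k. x / (real (Suc k) * (x + real (Suc k))))"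

definition PAV_score :: "nat \<Rightarrow> (nat \<Rightarrow> bndl) \<Rightarrow> bndl \<Rightarrow> real" where
  "PAV_score n R B = (\<Sum>i<n. genH (util (R i) B))"

definition gen_PAV_selects :: "nat \<Rightarrow> real \<Rightarrow> nat \<Rightarrow> real \<Rightarrow> (nat \<Rightarrow> bndl) \<Rightarrow> bndl \<Rightarrow> bool" where
  "gen_PAV_selects n c m \<alpha> R A \<longleftrightarrow> is_allocation c m \<alpha> A \<and>
     (\<forall>B. is_allocation c m \<alpha> B \<longrightarrow> PAV_score n R B \<le> PAV_score n R A)"

end

theory Submission
  imports Defs
begin

text \<open>Take two agents, the cake [0,1], one good and \<open>\<alpha> = 1\<close>; agent 0 approves only the
  cake and agent 1 only the good. Since \<open>H\<close> is monotone with \<open>H\<^sub>0 = 0\<close> and \<open>H\<^sub>1 = 1\<close>,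
  and an allocation containing the good has no room for cake, every allocation has PAV score
  at most 1, which allocating the good attains. That allocation leaves agent 0 with nothing,
  although agent 0 alone is \<open>1/2\<close>-cohesive, witnessed by the half-cake [0,1/2].\<close>

lemma genH_0: "genH 0 = 0"
  unfolding genH_def by simp

lemma genH_1: "genH 1 = 1"
proof -
  have "(\<lambda>k. 1 / real (Suc k) - 1 / real (Suc (Suc k))) sums (1 / real (Suc 0) - 0)"
    by (rule telescope_sums'[OF LIMSEQ_Suc[OF lim_1_over_n]])
  moreover have "1 / real (Suc k) - 1 / real (Suc (Suc k)) = 1 / (real (Suc k) * (1 + real (Suc k)))"
    for k :: nat
    by (simp add: field_simps)
  ultimately show ?thesis
    unfolding genH_def by (simp add: sums_iff)
qed

lemma summable_genH:
  assumes "0 \<le> x"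
  shows "summable (\<lambda>k. x / (real (Suc k) * (x + real (Suc k))))"
proof (rule summable_comparison_test')
  show "summable (\<lambda>k. x * inverse (real (Suc k) ^ 2))"
    using inverse_power_summable[of 2, where 'a = real]
    by (subst summable_Suc_iff) (simp add: summable_mult)
  show "norm (x / (real (Suc k) * (x + real (Suc k)))) \<le> x * inverse (real (Suc k) ^ 2)" for k
    using assms by (simp add: frac_le divide_inverse[symmetric] power2_eq_square mult_mono)
qed

lemma genH_mono:
  assumes "0 \<le> x" "x \<le> y"
  shows "genH x \<le> genH y"
  unfolding genH_def
proof (rule suminf_le)
  show "x / (real (Suc k) * (x + real (Suc k))) \<le> y / (real (Suc k) * (y + real (Suc k)))" for k
  proof -
    have "x * (y + real (Suc k)) \<le> y * (x + real (Suc k))"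
      using mult_right_mono[OF assms(2), of "real (Suc k)"] by (simp add: algebra_simps)
    then show ?thesis
      using assms by (simp add: divide_simps mult.commute mult.left_commute mult_left_mono)
  qed
  show "summable (\<lambda>k. x / (real (Suc k) * (x + real (Suc k))))"
    using assms(1) by (rule summable_genH)
  show "summable (\<lambda>k. y / (real (Suc k) * (y + real (Suc k))))"
    using assms by (intro summable_genH) linarith
qed

lemma is_piece_empty: "is_piece c {}"
  unfolding is_piece_def by (rule exI[of _ "[]"]) auto

lemma is_piece_Icc: "0 \<le> a \<Longrightarrow> a \<le> b \<Longrightarrow> b \<le> c \<Longrightarrow> is_piece c {a..b}"
  unfolding is_piece_def by (rule exI[of _ "[(a, b)]"]) auto

lemma is_piece_subset: "is_piece c S \<Longrightarrow> S \<subseteq> {0..c}"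
  unfolding is_piece_def by force

definition cake_or_good :: "nat \<Rightarrow> bndl" where
  "cake_or_good i = (if i = 0 then ({0..1}, {}) else ({}, {0}))"

lemma valid_instance_cake_or_good: "valid_instance 2 1 1 1 cake_or_good"
  unfolding valid_instance_def is_bundle_def cake_or_good_def
  using is_piece_Icc[of 0 1 1] is_piece_empty[of 1] by auto

lemma PAV_score_cake_or_good_le:
  assumes "is_allocation 1 1 1 B"
  shows "PAV_score 2 cake_or_good B \<le> 1"
proof -
  have piece: "fst B \<subseteq> {0..1}" and goods: "snd B \<subseteq> {0}" and size: "bsize B \<le> 1"
    using assms is_piece_subset unfolding is_allocation_def is_bundle_def by auto
  have score: "PAV_score 2 cake_or_good B = genH (len (fst B)) + genH (card (snd B))"
    using piece goods
    by (simp add: PAV_score_def numeral_2_eq_2 util_def cake_or_good_def len_def Int_absorb1 Int_absorb2)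
  have len_nonneg: "0 \<le> len (fst B)"
    unfolding len_def by simp
  show ?thesis
  proof (cases "snd B = {}")
    case True
    then have "len (fst B) \<le> 1"
      using size by (simp add: bsize_def)
    then show ?thesis
      using score True genH_mono[OF len_nonneg, of 1] by (simp add: genH_0 genH_1)
  next
    case False
    then have "snd B = {0}"
      using goods by auto
    moreover from this have "len (fst B) = 0"
      using size len_nonneg by (simp add: bsize_def)
    ultimately show ?thesis
      using score by (simp add: genH_0 genH_1)
  qed
qed

lemma gen_PAV_selects_good: "gen_PAV_selects 2 1 1 1 cake_or_good ({}, {0})"
proof -
  have "PAV_score 2 cake_or_good ({}, {0}) = genH 0 + genH 1"
    by (simp add: PAV_score_def numeral_2_eq_2 util_def cake_or_good_def len_def)
  then show ?thesis
    using PAV_score_cake_or_good_le is_piece_empty[of 1]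
    by (simp add: gen_PAV_selects_def is_allocation_def is_bundle_def bsize_def len_def
        genH_0 genH_1)
qed

lemma not_EJR_M_good: "\<not> EJR_M 2 1 1 1 cake_or_good ({}, {0})"
proof -
  have "t_cohesive 2 1 cake_or_good (1/2) {0}"
    by (simp add: t_cohesive_def bsize_def binter_def cake_or_good_def len_def)
  moreover have "is_bundle 1 1 ({0..1/2}, {}) \<and> bsize ({0..1/2}, {}) = 1/2
      \<and> (\<forall>i\<in>{0}. bsubseteq ({0..1/2}, {}) (cake_or_good i))"
    using is_piece_Icc[of 0 "1/2" 1]
    by (simp add: is_bundle_def bsize_def len_def bsubseteq_def cake_or_good_def)
  moreover have "util (cake_or_good 0) ({}, {0}) = 0"
    by (simp add: util_def cake_or_good_def len_def)
  ultimately show ?thesis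
    unfolding EJR_M_def by (metis half_gt_zero_iff singletonD zero_less_one not_le)
qed

theorem mainTheorem10:
  shows "\<exists>n c m \<alpha> R A. valid_instance n c m \<alpha> R \<and> gen_PAV_selects n c m \<alpha> R A
           \<and> \<not> EJR_M n c m \<alpha> R A"
  using valid_instance_cake_or_good gen_PAV_selects_good not_EJR_M_good by blast

end
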